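(* For any $\epsilon\in(0,1)$, $\nu_{\mathrm{NQF}}(\{\psi:M^\gamma_{\mathrm{ref}}(\psi)(1)\in(\epsilon,\epsilon^{-1})\})<\infty$. Moreover, if $Z:\mathring H^{0-}_{\mathrm{ref}}\to\mathbb R$ is such that $Z(\psi)$ is a centered Gaussian random variable when $\psi\sim\mu_{\mathrm{ref}}$, then the random variable $Z\big(\psi-\omega_{\mathrm{ref}}(\psi)/\omega_{\mathrm{ref}}(1)\big)\,1_{\{M^\gamma_{\mathrm{ref}}(\psi)(1)\in(\epsilon,\epsilon^{-1})\}}$ lies in $L^p(\nu_{\mathrm{NQF}})$ for all $p\ge1$.
   Context: $M$ closed manifold of even dimension $n$, metric $g_{\mathrm{ref}}$ with volume measure $\omega_{\mathrm{ref}}$, co-polyharmonic (GJMS) operator $P_{\mathrm{ref}}$ (positive semi-definite with kernel the constants) and constant Branson $Q$-curvature $Q_{\mathrm{ref}}$ with $Q_{\mathrm{ref}}(1)=\int Q_{\mathrm{ref}}\omega_{\mathrm{ref}}<(4\pi)^{n/2}(n/2-1)!$. $f\in C^\infty(M)$, $f>0$; $\sigma^2<2n^{-1}(4\pi)^{n/2}(n/2-1)!$; $a_n=\frac{2}{(n/2-1)!(4\pi)^{n/2}}$; $p_{\mathrm{ref}}=a_nP_{\mathrm{ref}}$; $\gamma=n\sigma\sqrt{a_n/2}$. $H^{0-}_{\mathrm{ref}}=\bigcap_{s>0}H^{-s}_{\mathrm{ref}}$ with $H^{s}_{\mathrm{ref}}$ the Sobolev spaces defined via $(1+p_{\mathrm{ref}})^{-s/n}$,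 $\mathring H^{0-}_{\mathrm{ref}}$ the mean-zero part. $\mu_{\mathrm{ref}}$: centered Gaussian measure on $\mathring H^{0-}_{\mathrm{ref}}$ with covariance kernel the Green kernel of $p_{\mathrm{ref}}$ on mean-zero functions. $M^\gamma_{\mathrm{ref}}$: co-polyharmonic Gaussian multiplicative chaos map from $H^{0-}_{\mathrm{ref}}$ to finite Borel measures, with $M^\gamma_{\mathrm{ref}}(\psi+c)=e^{\gamma c}M^\gamma_{\mathrm{ref}}(\psi)$ and $\mathbb E_{\mu_{\mathrm{ref}}}[M^\gamma_{\mathrm{ref}}(\psi)(1)^q]<\infty$ for $q<2n/\gamma^2$. $\nu_{\mathrm{NQF}}(A)=\int_{\mathbb R}\int_{\mathring H^{0-}_{\mathrm{ref}}}1_A(\psi+c)M^\gamma_{\mathrm{ref}}(\psi)(f)^{2Q_{\mathrm{ref}}(1)/(n\sigma^2)}\mu_{\mathrm{ref}}(d\psi)dc$. *)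

theory Defs
  imports "HOL-Probability.Probability"
begin

text \<open>The distribution space H^{0-} is modelled by a real vector type 'h (with the
  constant function 1 given as an element one), the manifold by a compact
  topological type 'm, and the GMC map by Mc :: 'h => 'm measure.\<close>

definition meas_pair :: "'m measure \<Rightarrow> ('m \<Rightarrow> real) \<Rightarrow> real" where
  "meas_pair m g = integral\<^sup>L m g"

definition nu_NQF ::
  "'h::real_vector measure \<Rightarrow> ('h \<Rightarrow> 'm measure) \<Rightarrow> ('m \<Rightarrow> real) \<Rightarrow> real \<Rightarrow> 'h \<Rightarrow> 'h measure" where
  "nu_NQF \<mu> Mc f s one =
     measure_of (space \<mu>) (sets \<mu>)
       (\<lambda>A. \<integral>\<^sup>+ c. (\<integral>\<^sup>+ \<psi>. indicator A (\<psi> + c *\<^sub>R one)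
               * ennreal (meas_pair (Mc \<psi>) f powr s) \<partial>\<mu>) \<partial>lborel)"

definition centered_gaussian :: "real measure \<Rightarrow> bool" where
  "centered_gaussian D \<longleftrightarrow> (\<exists>v\<ge>0. D = (if v = 0 then return borel 0
                                           else density lborel (normal_density 0 (sqrt v))))"

end

theory Submission
  imports Defs
begin

(* Shifting the field by a constant c multiplies the total chaos mass by exp (gamma c), so for each psi
   the c with psi + c in the window {eps < M(1) < 1/eps} form an interval of length -2 ln eps / gamma.
   As f is bounded above and below, the density M(psi)(f)^s is at most a constant times M(psi)(1)^s, and
   s = 2 Q(1) / (n sigma^2) lies below the moment threshold 2n / gamma^2. Integrating over c first thus
   bounds the nu-mass of the window by a finite moment of the chaos mass. The centred field is invariant
   under constant shifts, so the same computation applies to |Z|^p, and Young's inequality splits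
   |Z|^p M(1)^s into a Gaussian moment of Z and a slightly higher, still admissible, moment of the mass. *)

lemma measurable_pair_lborel_iff:
  "f \<in> (M \<Otimes>\<^sub>M lborel) \<rightarrow>\<^sub>M N \<longleftrightarrow> f \<in> (M \<Otimes>\<^sub>M borel) \<rightarrow>\<^sub>M N"
  by (simp add: measurable_cong_sets[OF sets_pair_measure_cong[OF refl sets_lborel]])

lemma nu_NQF_eq_distr_density:
  fixes \<mu> :: "'h::real_vector measure" and one :: 'h
  assumes "sigma_finite_measure \<mu>"
    and shift: "(\<lambda>(\<psi>, c). \<psi> + c *\<^sub>R one) \<in> (\<mu> \<Otimes>\<^sub>M borel) \<rightarrow>\<^sub>M \<mu>"
    and G: "(\<lambda>\<psi>. meas_pair (Mc \<psi>) f powr s) \<in> borel_measurable \<mu>"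
  shows "nu_NQF \<mu> Mc f s one =
    distr (density (\<mu> \<Otimes>\<^sub>M lborel) (\<lambda>(\<psi>, c). ennreal (meas_pair (Mc \<psi>) f powr s))) \<mu>
      (\<lambda>(\<psi>, c). \<psi> + c *\<^sub>R one)"
    (is "_ = ?N")
proof -
  interpret pair_sigma_finite \<mu> "lborel :: real measure"
    using assms(1) by (simp add: pair_sigma_finite_def lborel.sigma_finite_measure_axioms)
  have shift': "(\<lambda>(\<psi>, c). \<psi> + c *\<^sub>R one) \<in> (\<mu> \<Otimes>\<^sub>M lborel) \<rightarrow>\<^sub>M \<mu>"
    using shift by (simp add: measurable_pair_lborel_iff)
  have "emeasure ?N A =
      (\<integral>\<^sup>+ c. \<integral>\<^sup>+ \<psi>. indicator A (\<psi> + c *\<^sub>R one) * ennreal (meas_pair (Mc \<psi>) f powr s) \<partial>\<mu> \<partial>lborel)"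
    if A: "A \<in> sets \<mu>" for A
  proof -
    have ind: "(\<lambda>(\<psi>, c). indicator A (\<psi> + c *\<^sub>R one) :: ennreal) \<in> borel_measurable (\<mu> \<Otimes>\<^sub>M lborel)"
      using measurable_comp[OF shift' borel_measurable_indicator[OF A]] by (simp add: comp_def case_prod_beta')
    have "emeasure ?N A = (\<integral>\<^sup>+ \<phi>. indicator A \<phi> \<partial>?N)"
      using A by simp
    also have "\<dots> = (\<integral>\<^sup>+ x. indicator A (case x of (\<psi>, c) \<Rightarrow> \<psi> + c *\<^sub>R one)
        \<partial>density (\<mu> \<Otimes>\<^sub>M lborel) (\<lambda>(\<psi>, c). ennreal (meas_pair (Mc \<psi>) f powr s)))"
      using A shift' by (subst nn_integral_distr) auto
    also have "\<dots> = (\<integral>\<^sup>+ x. ennreal (meas_pair (Mc (fst x)) f powr s) * indicator A (fst x + snd x *\<^sub>R one)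
        \<partial>(\<mu> \<Otimes>\<^sub>M lborel))"
      using G ind by (subst nn_integral_density) (auto simp: case_prod_beta')
    also have "\<dots> = (\<integral>\<^sup>+ c. \<integral>\<^sup>+ \<psi>. indicator A (\<psi> + c *\<^sub>R one) * ennreal (meas_pair (Mc \<psi>) f powr s) \<partial>\<mu> \<partial>lborel)"
      using G ind by (subst nn_integral_snd[symmetric]) (auto simp: mult.commute case_prod_beta')
    finally show ?thesis .
  qed
  then have "nu_NQF \<mu> Mc f s one = measure_of (space \<mu>) (sets \<mu>) (emeasure ?N)"
    unfolding nu_NQF_def by (intro measure_of_eq sets.space_closed) (simp add: sets.sigma_sets_eq)
  also have "\<dots> = ?N"
    by (metis measure_of_of_measure sets_distr space_distr)
  finally show ?thesis .
qed

lemma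
  fixes \<mu> :: "'h::real_vector measure" and one :: 'h
  assumes "sigma_finite_measure \<mu>"
    and shift: "(\<lambda>(\<psi>, c). \<psi> + c *\<^sub>R one) \<in> (\<mu> \<Otimes>\<^sub>M borel) \<rightarrow>\<^sub>M \<mu>"
    and G: "(\<lambda>\<psi>. meas_pair (Mc \<psi>) f powr s) \<in> borel_measurable \<mu>"
  shows sets_nu_NQF: "sets (nu_NQF \<mu> Mc f s one) = sets \<mu>"
    and nn_integral_nu_NQF: "h \<in> borel_measurable \<mu> \<Longrightarrow> (\<integral>\<^sup>+ \<phi>. h \<phi> \<partial>nu_NQF \<mu> Mc f s one) =
      (\<integral>\<^sup>+ \<psi>. ennreal (meas_pair (Mc \<psi>) f powr s) * (\<integral>\<^sup>+ c. h (\<psi> + c *\<^sub>R one) \<partial>lborel) \<partial>\<mu>)"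
proof -
  interpret pair_sigma_finite \<mu> "lborel :: real measure"
    using assms(1) by (simp add: pair_sigma_finite_def lborel.sigma_finite_measure_axioms)
  note \<nu>_eq = nu_NQF_eq_distr_density[OF assms]
  show "sets (nu_NQF \<mu> Mc f s one) = sets \<mu>"
    unfolding \<nu>_eq by simp
  assume h: "h \<in> borel_measurable \<mu>"
  have shift': "(\<lambda>(\<psi>, c). \<psi> + c *\<^sub>R one) \<in> (\<mu> \<Otimes>\<^sub>M lborel) \<rightarrow>\<^sub>M \<mu>"
    using shift by (simp add: measurable_pair_lborel_iff)
  have h_shift: "(\<lambda>x. h (fst x + snd x *\<^sub>R one)) \<in> borel_measurable (\<mu> \<Otimes>\<^sub>M lborel)"
    using measurable_comp[OF shift' h] by (simp add: comp_def case_prod_beta')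
  have "(\<integral>\<^sup>+ \<phi>. h \<phi> \<partial>nu_NQF \<mu> Mc f s one) =
      (\<integral>\<^sup>+ x. ennreal (meas_pair (Mc (fst x)) f powr s) * h (fst x + snd x *\<^sub>R one) \<partial>(\<mu> \<Otimes>\<^sub>M lborel))"
    unfolding \<nu>_eq using shift' h G h_shift
    by (simp add: nn_integral_distr nn_integral_density case_prod_beta')
  also have "\<dots> = (\<integral>\<^sup>+ \<psi>. \<integral>\<^sup>+ c. ennreal (meas_pair (Mc \<psi>) f powr s) * h (\<psi> + c *\<^sub>R one) \<partial>lborel \<partial>\<mu>)"
    using G h_shift by (subst lborel.nn_integral_fst[symmetric]) auto
  also have "\<dots> = (\<integral>\<^sup>+ \<psi>. ennreal (meas_pair (Mc \<psi>) f powr s) * (\<integral>\<^sup>+ c. h (\<psi> + c *\<^sub>R one) \<partial>lborel) \<partial>\<mu>)"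
    using measurable_Pair2[OF h_shift] by (intro nn_integral_cong nn_integral_cmult) simp
  finally show "(\<integral>\<^sup>+ \<phi>. h \<phi> \<partial>nu_NQF \<mu> Mc f s one) =
      (\<integral>\<^sup>+ \<psi>. ennreal (meas_pair (Mc \<psi>) f powr s) * (\<integral>\<^sup>+ c. h (\<psi> + c *\<^sub>R one) \<partial>lborel) \<partial>\<mu>)" .
qed

lemma emeasure_exp_window_le:
  fixes \<gamma> \<epsilon> m :: real
  assumes "\<gamma> > 0" "0 < \<epsilon>" "\<epsilon> < 1"
  shows "emeasure lborel {c. exp (\<gamma> * c) * m \<in> {\<epsilon><..<1/\<epsilon>}} \<le> ennreal (- 2 * ln \<epsilon> / \<gamma>)"
proof (cases "m > 0")
  case True
  define lo where "lo = (ln \<epsilon> - ln m) / \<gamma>"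
  define hi where "hi = (- ln \<epsilon> - ln m) / \<gamma>"
  have "exp (\<gamma> * c) * m \<in> {\<epsilon><..<1/\<epsilon>} \<longleftrightarrow> c \<in> {lo<..<hi}" for c
  proof -
    have "exp (\<gamma> * c) * m = exp (\<gamma> * c + ln m)"
      using True by (simp add: exp_add)
    moreover have "\<epsilon> = exp (ln \<epsilon>)" "1 / \<epsilon> = exp (- ln \<epsilon>)"
      using assms by (simp_all add: exp_minus inverse_eq_divide)
    ultimately have "exp (\<gamma> * c) * m \<in> {\<epsilon><..<1/\<epsilon>} \<longleftrightarrow>
        ln \<epsilon> - ln m < \<gamma> * c \<and> \<gamma> * c < - ln \<epsilon> - ln m"
      by (metis exp_less_cancel_iff greaterThanLessThan_iff diff_less_eq less_diff_eq)
    also have "\<dots> \<longleftrightarrow> c \<in> {lo<..<hi}"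
      using assms(1) by (simp add: lo_def hi_def pos_divide_less_eq pos_less_divide_eq mult.commute)
    finally show ?thesis .
  qed
  then have "{c. exp (\<gamma> * c) * m \<in> {\<epsilon><..<1/\<epsilon>}} = {lo<..<hi}" by blast
  moreover have "hi - lo = - 2 * ln \<epsilon> / \<gamma>"
    using assms(1) by (simp add: lo_def hi_def field_simps)
  moreover have "lo \<le> hi"
    using assms by (simp add: lo_def hi_def divide_right_mono)
  ultimately show ?thesis by simp
next
  case False
  then have "\<not> \<epsilon> < exp (\<gamma> * c) * m" for c
    using \<open>0 < \<epsilon>\<close> mult_nonneg_nonpos[of "exp (\<gamma> * c)" m] by simp
  then have "{c. exp (\<gamma> * c) * m \<in> {\<epsilon><..<1/\<epsilon>}} = {}"
    by simp
  then show ?thesis by (simp only: emeasure_empty zero_le)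
qed

lemma Youngs_inequality_unweighted:
  fixes x y R :: real
  assumes "x \<ge> 0" "y \<ge> 0" "R > 1"
  shows "x * y \<le> x powr (R / (R - 1)) + y powr R"
proof -
  have R': "R / (R - 1) > 1" and conj: "1 / (R / (R - 1)) + 1 / R = 1"
    using assms(3) by (simp_all add: field_simps)
  have "x * y \<le> x powr (R / (R - 1)) / (R / (R - 1)) + y powr R / R"
    using Youngs_inequality[OF R' assms(3) conj assms(1,2)] .
  also have "\<dots> \<le> x powr (R / (R - 1)) + y powr R"
    using R' assms(3) divide_left_mono[of 1 "R / (R - 1)" "x powr (R / (R - 1))"]
      divide_left_mono[of 1 R "y powr R"] by simp
  finally show ?thesis .
qed

lemma abs_powr_le_one_plus_power:
  fixes x q :: real
  assumes "q \<ge> 0"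
  shows "\<bar>x\<bar> powr q \<le> 1 + \<bar>x\<bar> ^ nat \<lceil>q\<rceil>"
proof (cases "\<bar>x\<bar> \<le> 1")
  case True
  then have "\<bar>x\<bar> powr q \<le> 1"
    using powr_mono2[OF assms _ True] by simp
  then show ?thesis by (simp add: add_increasing2)
next
  case False
  then have "\<bar>x\<bar> powr q \<le> \<bar>x\<bar> powr real (nat \<lceil>q\<rceil>)"
    by (intro powr_mono) (auto simp: real_nat_ceiling_ge)
  also have "\<dots> = \<bar>x\<bar> ^ nat \<lceil>q\<rceil>"
    using False by (simp add: powr_realpow)
  finally show ?thesis by simp
qed

lemma centered_gaussian_abs_moment_finite:
  assumes "centered_gaussian D" "q \<ge> 0"
  shows "(\<integral>\<^sup>+ x. ennreal (\<bar>x\<bar> powr q) \<partial>D) < \<infinity>"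
proof -
  obtain v where "v \<ge> 0" and D: "D = (if v = 0 then return borel 0
      else density lborel (normal_density 0 (sqrt v)))"
    using assms(1) unfolding centered_gaussian_def by blast
  show ?thesis
  proof (cases "v = 0")
    case True
    then show ?thesis using D by (simp add: nn_integral_return)
  next
    case False
    define k where "k = nat \<lceil>q\<rceil>"
    let ?g = "normal_density 0 (sqrt v)"
    have "(\<integral>\<^sup>+ x. ennreal (\<bar>x\<bar> powr q) \<partial>D) = (\<integral>\<^sup>+ x. ennreal (?g x * \<bar>x\<bar> powr q) \<partial>lborel)"
      using D False by (simp add: nn_integral_density ennreal_mult'')
    also have "\<dots> \<le> (\<integral>\<^sup>+ x. ennreal (?g x + ?g x * \<bar>x - 0\<bar> ^ k) \<partial>lborel)"
    proof (intro nn_integral_mono ennreal_leI)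
      fix x
      have "?g x * \<bar>x\<bar> powr q \<le> ?g x * (1 + \<bar>x\<bar> ^ k)"
        unfolding k_def by (intro mult_left_mono abs_powr_le_one_plus_power assms(2) normal_density_nonneg)
      then show "?g x * \<bar>x\<bar> powr q \<le> ?g x + ?g x * \<bar>x - 0\<bar> ^ k"
        by (simp add: algebra_simps)
    qed
    also have "\<dots> < \<infinity>"
    proof -
      have "integrable lborel (\<lambda>x. ?g x + ?g x * \<bar>x - 0\<bar> ^ k)"
        using \<open>v \<ge> 0\<close> False
        by (intro Bochner_Integration.integrable_add integrable_normal_density integrable_normal_moment_abs) auto
      then show ?thesis
        by (simp add: integrable_iff_bounded)
    qed
    finally show ?thesis .
  qed
qed

lemma powr_le_max_powr_mult:
  fixes a b m x s :: real
  assumes "0 < a" "0 \<le> m" "a * m \<le> x" "x \<le> b * m"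
  shows "x powr s \<le> max (a powr s) (b powr s) * m powr s"
proof (cases "m = 0")
  case True
  then show ?thesis using assms by simp
next
  case False
  then have am: "a * m > 0" using assms(1,2) by simp
  show ?thesis
  proof (cases "s \<ge> 0")
    case True
    have "x powr s \<le> (b * m) powr s" using assms(3,4) am True by (intro powr_mono2) auto
    also have "\<dots> = b powr s * m powr s"
      using assms am by (simp add: powr_mult zero_less_mult_iff)
    also have "\<dots> \<le> max (a powr s) (b powr s) * m powr s" by (intro mult_right_mono) auto
    finally show ?thesis .
  next
    case False
    have "x powr s \<le> (a * m) powr s" using assms(3) am False by (intro powr_mono2') auto
    also have "\<dots> = a powr s * m powr s" using assms(1,2) by (simp add: powr_mult)
    also have "\<dots> \<le> max (a powr s) (b powr s) * m powr s" by (intro mult_right_mono) auto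
    finally show ?thesis .
  qed
qed

lemma (in finite_measure) integral_between_const_bounds:
  fixes f :: "'a \<Rightarrow> real"
  assumes "f \<in> borel_measurable M" "\<And>x. a \<le> f x" "\<And>x. f x \<le> b"
  shows "a * measure M (space M) \<le> integral\<^sup>L M f" "integral\<^sup>L M f \<le> b * measure M (space M)"
proof -
  have "\<bar>f x\<bar> \<le> max \<bar>a\<bar> \<bar>b\<bar>" for x
    using assms(2,3)[of x] by linarith
  then have "integrable M f"
    using assms(1) by (intro integrable_const_bound[where B = "max \<bar>a\<bar> \<bar>b\<bar>"] AE_I2) simp_all
  then show "a * measure M (space M) \<le> integral\<^sup>L M f" "integral\<^sup>L M f \<le> b * measure M (space M)"
    using integral_mono[of M "\<lambda>_. a" f] integral_mono[of M f "\<lambda>_. b"] assms(2,3)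
    by (auto simp: mult.commute)
qed

lemma exists_gt_one_mult_less:
  fixes s B :: real
  assumes "s < B"
  obtains R where "R > 1" "s * R < B"
proof (cases "s \<le> 0")
  case True
  then show ?thesis using assms that[of 2] by simp
next
  case False
  then show ?thesis using assms that[of "(s + B) / (2 * s)"] by (simp add: field_simps)
qed

lemma continuous_pos_compact_bounds:
  fixes f :: "'m::topological_space \<Rightarrow> real"
  assumes "compact (UNIV :: 'm set)" "continuous_on UNIV f" "\<And>x. f x > 0"
  obtains a b where "0 < a" "\<And>x. a \<le> f x" "\<And>x. f x \<le> b"
proof -
  have "compact (range f)"
    using assms(2,1) by (rule compact_continuous_image)
  then obtain x0 x1 where "\<And>x. f x0 \<le> f x" "\<And>x. f x \<le> f x1"
    using compact_attains_inf[of "range f"] compact_attains_sup[of "range f"] by blast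
  with assms(3) show ?thesis by (intro that[of "f x0" "f x1"]) auto
qed

lemma gmc_exponent_bounds:
  fixes n :: nat and \<sigma> Q1 \<gamma> :: real
  assumes \<gamma>: "\<gamma> = real n * \<sigma> * sqrt ((2 / (fact (n div 2 - 1) * (4 * pi) ^ (n div 2))) / 2)"
    and "n > 0" "\<sigma> > 0" and Q1: "Q1 < (4 * pi) ^ (n div 2) * fact (n div 2 - 1)"
  shows "\<gamma> > 0" "2 * Q1 / (real n * \<sigma>\<^sup>2) < 2 * real n / \<gamma>\<^sup>2"
proof -
  define F :: real where "F = fact (n div 2 - 1) * (4 * pi) ^ (n div 2)"
  have "F > 0" by (simp add: F_def)
  have \<gamma>F: "\<gamma> = real n * \<sigma> * sqrt (1 / F)"
    by (simp add: \<gamma> F_def)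
  then show \<gamma>_pos: "\<gamma> > 0"
    using assms(2,3) \<open>F > 0\<close> by simp
  have "\<gamma>\<^sup>2 = (real n)\<^sup>2 * \<sigma>\<^sup>2 / F"
    using \<open>F > 0\<close> by (simp add: \<gamma>F power_mult_distrib)
  then have "2 * real n / \<gamma>\<^sup>2 = 2 * F / (real n * \<sigma>\<^sup>2)"
    using assms(2,3) \<open>F > 0\<close> \<gamma>_pos by (simp add: field_simps power2_eq_square)
  moreover have "Q1 < F"
    using Q1 by (simp add: F_def mult.commute)
  ultimately show "2 * Q1 / (real n * \<sigma>\<^sup>2) < 2 * real n / \<gamma>\<^sup>2"
    using assms(2,3) by (simp add: divide_strict_right_mono)
qed

lemma centering_shift_invariant:
  fixes \<omega> :: "'h::real_vector \<Rightarrow> real"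
  assumes "linear \<omega>" "\<omega> one \<noteq> 0"
  shows "(\<psi> + c *\<^sub>R one) - (\<omega> (\<psi> + c *\<^sub>R one) / \<omega> one) *\<^sub>R one = \<psi> - (\<omega> \<psi> / \<omega> one) *\<^sub>R one"
proof -
  have "\<omega> (\<psi> + c *\<^sub>R one) / \<omega> one = \<omega> \<psi> / \<omega> one + c"
    using assms by (simp add: linear_add linear_scale add_divide_distrib)
  then show ?thesis
    by (simp add: scaleR_add_left algebra_simps)
qed

locale gmc_shift_setting =
  fixes \<mu> :: "'h::real_vector measure" and one :: 'h
    and Mc :: "'h \<Rightarrow> 'm::topological_space measure" and f :: "'m \<Rightarrow> real"
    and s \<gamma> a b :: real
  assumes sigma_finite: "sigma_finite_measure \<mu>"
    and space_eq: "space \<mu> = UNIV"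
    and shift_measurable: "(\<lambda>(\<psi>, c). \<psi> + c *\<^sub>R one) \<in> (\<mu> \<Otimes>\<^sub>M borel) \<rightarrow>\<^sub>M \<mu>"
    and Mc_finite: "\<And>\<psi>. finite_measure (Mc \<psi>)"
    and Mc_sets: "\<And>\<psi>. sets (Mc \<psi>) = sets borel"
    and Mc_measurable: "\<And>g. g \<in> borel_measurable borel \<Longrightarrow>
                          (\<lambda>\<psi>. meas_pair (Mc \<psi>) g) \<in> borel_measurable \<mu>"
    and Mc_shift: "\<And>\<psi> c. Mc (\<psi> + c *\<^sub>R one) = scale_measure (ennreal (exp (\<gamma> * c))) (Mc \<psi>)"
    and gamma_pos: "\<gamma> > 0"
    and f_measurable: "f \<in> borel_measurable borel"
    and f_lower: "0 < a" "\<And>x. a \<le> f x"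
    and f_upper: "\<And>x. f x \<le> b"
begin

abbreviation \<nu> :: "'h measure" where
  "\<nu> \<equiv> nu_NQF \<mu> Mc f s one"

definition mass :: "'h \<Rightarrow> real" where
  "mass \<psi> = meas_pair (Mc \<psi>) (\<lambda>_. 1)"

definition window :: "real \<Rightarrow> 'h set" where
  "window \<epsilon> = {\<phi>. mass \<phi> \<in> {\<epsilon><..<1/\<epsilon>}}"

lemma mass_measurable [measurable]: "mass \<in> borel_measurable \<mu>"
  unfolding mass_def by (rule Mc_measurable) simp

lemma mass_eq_measure: "mass \<psi> = measure (Mc \<psi>) (space (Mc \<psi>))"
  by (simp add: mass_def meas_pair_def)

lemma mass_shift: "mass (\<psi> + c *\<^sub>R one) = exp (\<gamma> * c) * mass \<psi>"
  by (simp add: mass_eq_measure Mc_shift space_scale_measure)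

lemma density_measurable [measurable]:
  "(\<lambda>\<psi>. meas_pair (Mc \<psi>) f powr s) \<in> borel_measurable \<mu>"
  using Mc_measurable[OF f_measurable] by measurable

lemma density_le: "meas_pair (Mc \<psi>) f powr s \<le> max (a powr s) (b powr s) * mass \<psi> powr s"
proof -
  interpret finite_measure "Mc \<psi>" by (rule Mc_finite)
  have "f \<in> borel_measurable (Mc \<psi>)"
    using f_measurable by (simp add: measurable_cong_sets[OF Mc_sets refl])
  from integral_between_const_bounds[OF this f_lower(2) f_upper]
  show ?thesis
    using f_lower(1) by (intro powr_le_max_powr_mult) (simp_all add: mass_eq_measure meas_pair_def)
qed

lemma sets_\<nu> [measurable_cong]: "sets \<nu> = sets \<mu>"
  by (rule sets_nu_NQF[OF sigma_finite shift_measurable density_measurable])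

lemma window_sets [measurable]: "window \<epsilon> \<in> sets \<mu>"
proof -
  have "mass -` {\<epsilon><..<1/\<epsilon>} \<inter> space \<mu> \<in> sets \<mu>"
    by (rule measurable_sets[OF mass_measurable]) simp
  then show ?thesis
    by (simp add: window_def space_eq vimage_def)
qed

lemma shift_line_measurable [measurable]: "(\<lambda>c::real. \<psi> + c *\<^sub>R one) \<in> borel \<rightarrow>\<^sub>M \<mu>"
proof -
  have "(\<lambda>c::real. (\<psi>, c)) \<in> borel \<rightarrow>\<^sub>M \<mu> \<Otimes>\<^sub>M borel"
    using measurable_Pair2'[of \<psi> \<mu> borel] space_eq by simp
  from measurable_compose[OF this shift_measurable] show ?thesis by simp
qed

lemma window_line_length:
  assumes "0 < \<epsilon>" "\<epsilon> < 1"
  shows "(\<integral>\<^sup>+ c. indicator (window \<epsilon>) (\<psi> + c *\<^sub>R one) \<partial>lborel) \<le> ennreal (- 2 * ln \<epsilon> / \<gamma>)"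
proof -
  have "(\<integral>\<^sup>+ c. indicator (window \<epsilon>) (\<psi> + c *\<^sub>R one) \<partial>lborel)
      = (\<integral>\<^sup>+ c. indicator {c. exp (\<gamma> * c) * mass \<psi> \<in> {\<epsilon><..<1/\<epsilon>}} c \<partial>lborel)"
    by (intro nn_integral_cong) (simp add: indicator_def window_def mass_shift)
  also have "\<dots> = emeasure lborel {c. exp (\<gamma> * c) * mass \<psi> \<in> {\<epsilon><..<1/\<epsilon>}}"
    by (intro nn_integral_indicator) measurable
  also have "\<dots> \<le> ennreal (- 2 * ln \<epsilon> / \<gamma>)"
    using gamma_pos assms by (rule emeasure_exp_window_le)
  finally show ?thesis .
qed

lemma nn_integral_window_le:
  assumes H [measurable]: "H \<in> borel_measurable \<mu>"
    and H_shift: "\<And>\<psi> c. H (\<psi> + c *\<^sub>R one) = H \<psi>"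
    and "0 < \<epsilon>" "\<epsilon> < 1"
  shows "(\<integral>\<^sup>+ \<phi>. H \<phi> * indicator (window \<epsilon>) \<phi> \<partial>\<nu>)
    \<le> ennreal (- 2 * ln \<epsilon> / \<gamma> * max (a powr s) (b powr s)) * (\<integral>\<^sup>+ \<psi>. H \<psi> * ennreal (mass \<psi> powr s) \<partial>\<mu>)"
proof -
  define L where "L = - 2 * ln \<epsilon> / \<gamma>"
  define C where "C = max (a powr s) (b powr s)"
  have "L \<ge> 0" "C \<ge> 0"
    using assms(3,4) gamma_pos by (auto simp: L_def C_def divide_nonpos_pos le_max_iff_disj)
  have "(\<integral>\<^sup>+ \<phi>. H \<phi> * indicator (window \<epsilon>) \<phi> \<partial>\<nu>) = (\<integral>\<^sup>+ \<psi>. ennreal (meas_pair (Mc \<psi>) f powr s) *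
      (\<integral>\<^sup>+ c. H (\<psi> + c *\<^sub>R one) * indicator (window \<epsilon>) (\<psi> + c *\<^sub>R one) \<partial>lborel) \<partial>\<mu>)"
    by (rule nn_integral_nu_NQF[OF sigma_finite shift_measurable density_measurable]) measurable
  also have "\<dots> = (\<integral>\<^sup>+ \<psi>. ennreal (meas_pair (Mc \<psi>) f powr s) *
      (H \<psi> * (\<integral>\<^sup>+ c. indicator (window \<epsilon>) (\<psi> + c *\<^sub>R one) \<partial>lborel)) \<partial>\<mu>)"
    unfolding H_shift by (intro nn_integral_cong arg_cong2[where f = "(*)"] refl nn_integral_cmult) measurable
  also have "\<dots> \<le> (\<integral>\<^sup>+ \<psi>. ennreal (C * mass \<psi> powr s) * (H \<psi> * ennreal L) \<partial>\<mu>)"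
    using window_line_length[OF assms(3,4)] density_le
    by (intro nn_integral_mono mult_mono ennreal_leI) (auto simp: C_def L_def)
  also have "\<dots> = ennreal (L * C) * (\<integral>\<^sup>+ \<psi>. H \<psi> * ennreal (mass \<psi> powr s) \<partial>\<mu>)"
    using \<open>L \<ge> 0\<close> \<open>C \<ge> 0\<close>
    by (subst nn_integral_cmult[symmetric]) (auto intro!: nn_integral_cong simp: ennreal_mult'' mult_ac)
  finally show ?thesis
    by (simp add: L_def C_def)
qed

lemma emeasure_window_finite:
  assumes "(\<integral>\<^sup>+ \<psi>. ennreal (mass \<psi> powr s) \<partial>\<mu>) < \<infinity>" "0 < \<epsilon>" "\<epsilon> < 1"
  shows "emeasure \<nu> (window \<epsilon>) < \<infinity>"
proof -
  have "emeasure \<nu> (window \<epsilon>) = (\<integral>\<^sup>+ \<phi>. 1 * indicator (window \<epsilon>) \<phi> \<partial>\<nu>)"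
    by simp
  also have "\<dots> \<le> ennreal (- 2 * ln \<epsilon> / \<gamma> * max (a powr s) (b powr s)) * (\<integral>\<^sup>+ \<psi>. 1 * ennreal (mass \<psi> powr s) \<partial>\<mu>)"
    using assms(2,3) by (intro nn_integral_window_le) simp_all
  also have "\<dots> < \<infinity>"
    using assms(1) by (simp add: ennreal_mult_less_top)
  finally show ?thesis .
qed

lemma nn_integral_window_powr_finite:
  assumes h [measurable]: "h \<in> borel_measurable \<mu>"
    and h_shift: "\<And>\<psi> c. h (\<psi> + c *\<^sub>R one) = h \<psi>"
    and "0 < \<epsilon>" "\<epsilon> < 1" "p > 0"
    and h_moments: "\<And>q. q \<ge> 0 \<Longrightarrow> (\<integral>\<^sup>+ \<psi>. ennreal (\<bar>h \<psi>\<bar> powr q) \<partial>\<mu>) < \<infinity>"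
    and mass_moments: "\<And>q. q < B \<Longrightarrow> (\<integral>\<^sup>+ \<psi>. ennreal (mass \<psi> powr q) \<partial>\<mu>) < \<infinity>"
    and "s < B"
  shows "(\<integral>\<^sup>+ \<phi>. ennreal (\<bar>h \<phi> * indicator (window \<epsilon>) \<phi>\<bar> powr p) \<partial>\<nu>) < \<infinity>"
proof -
  obtain R where "R > 1" "s * R < B"
    using exists_gt_one_mult_less[OF \<open>s < B\<close>] .
  have "(\<integral>\<^sup>+ \<phi>. ennreal (\<bar>h \<phi> * indicator (window \<epsilon>) \<phi>\<bar> powr p) \<partial>\<nu>)
      = (\<integral>\<^sup>+ \<phi>. ennreal (\<bar>h \<phi>\<bar> powr p) * indicator (window \<epsilon>) \<phi> \<partial>\<nu>)"
    using \<open>p > 0\<close> by (intro nn_integral_cong) (simp add: indicator_def)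
  also have "\<dots> \<le> ennreal (- 2 * ln \<epsilon> / \<gamma> * max (a powr s) (b powr s)) *
      (\<integral>\<^sup>+ \<psi>. ennreal (\<bar>h \<psi>\<bar> powr p) * ennreal (mass \<psi> powr s) \<partial>\<mu>)"
    using assms(3,4) by (intro nn_integral_window_le) (simp_all add: h_shift)
  also have "(\<integral>\<^sup>+ \<psi>. ennreal (\<bar>h \<psi>\<bar> powr p) * ennreal (mass \<psi> powr s) \<partial>\<mu>)
      \<le> (\<integral>\<^sup>+ \<psi>. ennreal (\<bar>h \<psi>\<bar> powr (p * (R / (R - 1)))) + ennreal (mass \<psi> powr (s * R)) \<partial>\<mu>)"
  proof (intro nn_integral_mono)
    fix \<psi>
    have "\<bar>h \<psi>\<bar> powr p * mass \<psi> powr s \<le> (\<bar>h \<psi>\<bar> powr p) powr (R / (R - 1)) + (mass \<psi> powr s) powr R"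
      using \<open>R > 1\<close> by (intro Youngs_inequality_unweighted) simp_all
    then show "ennreal (\<bar>h \<psi>\<bar> powr p) * ennreal (mass \<psi> powr s)
        \<le> ennreal (\<bar>h \<psi>\<bar> powr (p * (R / (R - 1)))) + ennreal (mass \<psi> powr (s * R))"
      by (simp add: powr_powr ennreal_leI flip: ennreal_plus ennreal_mult'')
  qed
  also have "\<dots> = (\<integral>\<^sup>+ \<psi>. ennreal (\<bar>h \<psi>\<bar> powr (p * (R / (R - 1)))) \<partial>\<mu>) + (\<integral>\<^sup>+ \<psi>. ennreal (mass \<psi> powr (s * R)) \<partial>\<mu>)"
    by (rule nn_integral_add) measurable
  also have "ennreal (- 2 * ln \<epsilon> / \<gamma> * max (a powr s) (b powr s)) * \<dots> < \<infinity>"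
    using h_moments[of "p * (R / (R - 1))"] mass_moments[OF \<open>s * R < B\<close>] \<open>p > 0\<close> \<open>R > 1\<close>
    by (simp add: ennreal_mult_less_top)
  finally show ?thesis
    by (simp add: mult_left_mono)
qed

end

theorem mainTheorem7:
  fixes n :: nat and \<sigma> Q1 :: real
    and \<mu> :: "'h::real_vector measure"
    and one :: 'h and \<omega> :: "'h \<Rightarrow> real"
    and Mc :: "'h \<Rightarrow> 'm::topological_space measure"
    and f :: "'m \<Rightarrow> real"
    and Z :: "'h \<Rightarrow> real" and \<epsilon> :: real
  defines "\<gamma> \<equiv> real n * \<sigma> * sqrt ((2 / (fact (n div 2 - 1) * (4 * pi) ^ (n div 2))) / 2)"
    and "\<nu> \<equiv> nu_NQF \<mu> Mc f (2 * Q1 / (real n * \<sigma>\<^sup>2)) one"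
    and "E \<equiv> {\<phi>. meas_pair (Mc \<phi>) (\<lambda>_. 1) \<in> {\<epsilon><..<1/\<epsilon>}}"
  assumes n: "even n" "n \<ge> 2"
    and Q1: "Q1 < (4 * pi) ^ (n div 2) * fact (n div 2 - 1)"
    and sigma: "\<sigma> > 0" "\<sigma>\<^sup>2 < 2 / real n * (4 * pi) ^ (n div 2) * fact (n div 2 - 1)"
    and M_cpt: "compact (UNIV :: 'm set)"
    and f_cont: "continuous_on UNIV f" and f_pos: "\<And>x. f x > 0"
    and mu_prob: "prob_space \<mu>" and mu_space: "space \<mu> = UNIV"
    and omega_lin: "linear \<omega>" and omega_one: "\<omega> one > 0"
    and mu_meanzero: "AE \<psi> in \<mu>. \<omega> \<psi> = 0"
    and shift_meas: "(\<lambda>(\<psi>, c). \<psi> + c *\<^sub>R one) \<in> (\<mu> \<Otimes>\<^sub>M borel) \<rightarrow>\<^sub>M \<mu>"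
    and center_meas: "(\<lambda>\<psi>. \<psi> - (\<omega> \<psi> / \<omega> one) *\<^sub>R one) \<in> \<mu> \<rightarrow>\<^sub>M \<mu>"
    and Mc_finite: "\<And>\<psi>. finite_measure (Mc \<psi>)"
    and Mc_sets: "\<And>\<psi>. sets (Mc \<psi>) = sets borel"
    and Mc_meas: "\<And>g. g \<in> borel_measurable borel \<Longrightarrow>
                    (\<lambda>\<psi>. meas_pair (Mc \<psi>) g) \<in> borel_measurable \<mu>"
    and Mc_shift: "\<And>\<psi> c. Mc (\<psi> + c *\<^sub>R one) = scale_measure (ennreal (exp (\<gamma> * c))) (Mc \<psi>)"
    and Mc_moments: "\<And>q. q < 2 * real n / \<gamma>\<^sup>2 \<Longrightarrow>
                    (\<integral>\<^sup>+ \<psi>. ennreal (meas_pair (Mc \<psi>) (\<lambda>_. 1) powr q) \<partial>\<mu>) < \<infinity>"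
    and Z_meas: "Z \<in> borel_measurable \<mu>"
    and Z_gauss: "centered_gaussian (distr \<mu> borel Z)"
    and eps: "0 < \<epsilon>" "\<epsilon> < 1"
  shows "emeasure \<nu> E < \<infinity> \<and>
         (\<forall>p::real. p \<ge> 1 \<longrightarrow>
            (\<lambda>\<phi>. Z (\<phi> - (\<omega> \<phi> / \<omega> one) *\<^sub>R one) * indicator E \<phi>) \<in> borel_measurable \<nu> \<and>
            (\<integral>\<^sup>+ \<phi>. ennreal (\<bar>Z (\<phi> - (\<omega> \<phi> / \<omega> one) *\<^sub>R one) * indicator E \<phi>\<bar> powr p) \<partial>\<nu>) < \<infinity>)"
proof -
  interpret prob_space \<mu> by (fact mu_prob)
  obtain a b where f_bounds: "0 < a" "\<And>x. a \<le> f x" "\<And>x. f x \<le> b"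
    using continuous_pos_compact_bounds[OF M_cpt f_cont f_pos] by blast
  define s where "s = 2 * Q1 / (real n * \<sigma>\<^sup>2)"
  have gamma_pos: "\<gamma> > 0" and s_less: "s < 2 * real n / \<gamma>\<^sup>2"
    using gmc_exponent_bounds[OF meta_eq_to_obj_eq[OF \<gamma>_def] _ sigma(1) Q1] n
    unfolding s_def by auto
  interpret gmc_shift_setting \<mu> one Mc f s \<gamma> a b
    by (rule gmc_shift_setting.intro[OF prob_space_imp_sigma_finite[OF mu_prob] mu_space shift_meas
          Mc_finite Mc_sets Mc_meas Mc_shift gamma_pos borel_measurable_continuous_onI[OF f_cont] f_bounds])
  have mass_moments: "(\<integral>\<^sup>+ \<psi>. ennreal (mass \<psi> powr q) \<partial>\<mu>) < \<infinity>" if "q < 2 * real n / \<gamma>\<^sup>2" for q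
    unfolding mass_def using that by (rule Mc_moments)
  define cen where "cen \<phi> = \<phi> - (\<omega> \<phi> / \<omega> one) *\<^sub>R one" for \<phi>
  have Z_cen [measurable]: "(\<lambda>\<phi>. Z (cen \<phi>)) \<in> borel_measurable \<mu>"
    unfolding cen_def by (rule measurable_compose[OF center_meas Z_meas])
  have Z_cen_shift: "Z (cen (\<psi> + c *\<^sub>R one)) = Z (cen \<psi>)" for \<psi> c
    unfolding cen_def using omega_one by (simp add: centering_shift_invariant[OF omega_lin])
  have Z_cen_moments: "(\<integral>\<^sup>+ \<psi>. ennreal (\<bar>Z (cen \<psi>)\<bar> powr q) \<partial>\<mu>) < \<infinity>" if "q \<ge> 0" for q
  proof -
    have "(\<integral>\<^sup>+ \<psi>. ennreal (\<bar>Z (cen \<psi>)\<bar> powr q) \<partial>\<mu>) = (\<integral>\<^sup>+ x. ennreal (\<bar>x\<bar> powr q) \<partial>distr \<mu> borel Z)"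
      using mu_meanzero Z_meas by (subst nn_integral_distr) (auto intro!: nn_integral_cong_AE simp: cen_def)
    with centered_gaussian_abs_moment_finite[OF Z_gauss that] show ?thesis
      by simp
  qed
  have E: "E = window \<epsilon>"
    by (simp add: E_def window_def mass_def)
  have \<nu>: "\<nu> = nu_NQF \<mu> Mc f s one"
    by (simp add: \<nu>_def s_def)
  have "emeasure \<nu> E < \<infinity>"
    unfolding E \<nu> using mass_moments[OF s_less] eps by (rule emeasure_window_finite)
  moreover have "(\<lambda>\<phi>. Z (cen \<phi>) * indicator E \<phi>) \<in> borel_measurable \<nu>"
    unfolding E \<nu> by measurable
  moreover have "(\<integral>\<^sup>+ \<phi>. ennreal (\<bar>Z (cen \<phi>) * indicator E \<phi>\<bar> powr p) \<partial>\<nu>) < \<infinity>" if "p \<ge> 1" for p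
    unfolding E \<nu> using that
    by (intro nn_integral_window_powr_finite[OF Z_cen Z_cen_shift eps _ Z_cen_moments mass_moments s_less])
      simp_all
  ultimately show ?thesis
    unfolding cen_def by blast
qed

end
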